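(* Let $k\ge2$ and $T\ge3$ be integers, and let $a_1,\dots,a_k$ and $b_1,\dots,b_k$ be positive integers with $a_1=b_k=1$ and $a_ib_i\le T$ for all $i$. Set $\Delta=\sum_{i=1}^k a_ib_i$ and $N=\sum_{1\le i\le j\le k}a_ib_j$. Then \[\Delta\le\sqrt{32\,N\,T\ln T}.\] Moreover, this bound is tight up to constant factors. *)

theory Defs
  imports Complex_Main
begin

definition admissible :: "nat \<Rightarrow> nat \<Rightarrow> (nat \<Rightarrow> nat) \<Rightarrow> (nat \<Rightarrow> nat) \<Rightarrow> bool" where
  "admissible k T a b \<longleftrightarrow> k \<ge> 2 \<and> T \<ge> 3 \<and>
     (\<forall>i\<in>{1..k}. a i > 0 \<and> b i > 0 \<and> a i * b i \<le> T) \<and> a 1 = 1 \<and> b k = 1"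

definition Delta :: "nat \<Rightarrow> (nat \<Rightarrow> nat) \<Rightarrow> (nat \<Rightarrow> nat) \<Rightarrow> nat" where
  "Delta k a b = (\<Sum>i=1..k. a i * b i)"

definition NN :: "nat \<Rightarrow> (nat \<Rightarrow> nat) \<Rightarrow> (nat \<Rightarrow> nat) \<Rightarrow> nat" where
  "NN k a b = (\<Sum>j=1..k. \<Sum>i=1..j. a i * b j)"

end

theory Submission
  imports Defs "HOL-Analysis.Harmonic_Numbers" "HOL-Library.Discrete_Functions"
begin

text \<open>Sort the indices into dyadic classes by \<open>floor_log (a i)\<close>; as \<open>a i \<le> T\<close> there are at
  most \<open>floor_log T + 1 \<le> 8 ln T\<close> classes. Within a class the \<open>a\<close>-values differ by a factor
  less than 2, so for \<open>i \<le> j\<close> we get \<open>a i b i \<cdot> a j b j \<le> T a j b j \<le> 2T a i b j\<close>, and the square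
  of the class sum of \<open>a i b i\<close> is at most \<open>4T\<close> times the upper-triangular sum of \<open>a i b j\<close> over
  the class. Cauchy-Schwarz over the classes and superadditivity of upper-triangular sums
  give \<open>\<Delta>\<^sup>2 \<le> 4T \<cdot> 8 ln T \<cdot> N\<close>. Tightness is witnessed by the staircase \<open>a i = 2^(i-1)\<close>,
  \<open>b i = 2^(k-i)\<close> with \<open>2^(k-1) \<le> T < 2^k\<close>, where \<open>\<Delta> = k 2^(k-1)\<close> and \<open>N \<le> k 2^k\<close>.\<close>

definition upper_triangle_sum :: "'i::linorder set \<Rightarrow> ('i \<Rightarrow> real) \<Rightarrow> ('i \<Rightarrow> real) \<Rightarrow> real" where
  "upper_triangle_sum S a b = (\<Sum>i\<in>S. \<Sum>j\<in>S. if i \<le> j then a i * b j else 0)"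

lemma diagonal_product_le_off_diagonal:
  fixes ai bi aj bj T :: real
  assumes "ai * bi \<le> T" "0 \<le> ai" "0 \<le> bi" "0 \<le> aj" "0 \<le> bj" "aj \<le> 2 * ai"
  shows "(ai * bi) * (aj * bj) \<le> 2 * T * (ai * bj)"
proof -
  have "0 \<le> T"
    using assms by (meson mult_nonneg_nonneg order_trans)
  have "(ai * bi) * (aj * bj) \<le> T * (aj * bj)"
    using assms by (intro mult_right_mono) auto
  also have "\<dots> \<le> T * (2 * ai * bj)"
    using assms \<open>0 \<le> T\<close> by (intro mult_left_mono mult_right_mono) auto
  finally show ?thesis by (simp add: algebra_simps)
qed

lemma square_sum_le_upper_triangle_sum:
  fixes a b :: "'i::linorder \<Rightarrow> real"
  assumes "finite S"
    and nonneg: "\<And>i. i \<in> S \<Longrightarrow> a i \<ge> 0" "\<And>i. i \<in> S \<Longrightarrow> b i \<ge> 0"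
    and bounded: "\<And>i. i \<in> S \<Longrightarrow> a i * b i \<le> T"
    and ratio: "\<And>i j. i \<in> S \<Longrightarrow> j \<in> S \<Longrightarrow> a j \<le> 2 * a i"
  shows "(\<Sum>i\<in>S. a i * b i)\<^sup>2 \<le> 4 * T * upper_triangle_sum S a b"
proof -
  define h where "h i j = (if i \<le> j then a i * b j else 0)" for i j
  have ordered: "(a i * b i) * (a j * b j) \<le> 2 * T * h i j"
    if "i \<in> S" "j \<in> S" "i \<le> j" for i j
    using diagonal_product_le_off_diagonal[of "a i" "b i" T "a j" "b j"] that
      nonneg bounded ratio
    by (simp add: h_def)
  have "T \<ge> 0" if "i \<in> S" for i
    using nonneg[OF that] bounded[OF that] by (meson mult_nonneg_nonneg order_trans)
  then have h_nonneg: "2 * T * h i j \<ge> 0" if "i \<in> S" "j \<in> S" for i j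
    using that nonneg by (simp add: h_def)
  have pair: "(a i * b i) * (a j * b j) \<le> 2 * T * h i j + 2 * T * h j i"
    if "i \<in> S" "j \<in> S" for i j
  proof (cases "i \<le> j")
    case True
    then show ?thesis using ordered[OF that True] h_nonneg[of j i] that by simp
  next
    case False
    then have "(a j * b j) * (a i * b i) \<le> 2 * T * h j i"
      using that by (intro ordered) auto
    then have "(a i * b i) * (a j * b j) \<le> 2 * T * h j i"
      by (simp only: mult.commute)
    with h_nonneg[OF that] show ?thesis by linarith
  qed
  have "(\<Sum>i\<in>S. a i * b i)\<^sup>2 = (\<Sum>i\<in>S. \<Sum>j\<in>S. (a i * b i) * (a j * b j))"
    by (simp add: power2_eq_square sum_product)
  also have "\<dots> \<le> (\<Sum>i\<in>S. \<Sum>j\<in>S. 2 * T * h i j + 2 * T * h j i)"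
    using pair by (intro sum_mono) auto
  also have "\<dots> = 2 * T * (\<Sum>i\<in>S. \<Sum>j\<in>S. h i j) + 2 * T * (\<Sum>i\<in>S. \<Sum>j\<in>S. h j i)"
    by (simp only: sum_distrib_left[symmetric] sum.distrib)
  also have "(\<Sum>i\<in>S. \<Sum>j\<in>S. h j i) = (\<Sum>i\<in>S. \<Sum>j\<in>S. h i j)"
    by (rule sum.swap)
  finally show ?thesis
    unfolding upper_triangle_sum_def h_def by simp
qed

lemma sum_upper_triangle_sum_fibres_le:
  fixes a b :: "'i::linorder \<Rightarrow> real"
  assumes "finite S" "finite K" "f ` S \<subseteq> K"
    and "\<And>i. i \<in> S \<Longrightarrow> a i \<ge> 0" "\<And>i. i \<in> S \<Longrightarrow> b i \<ge> 0"
  shows "(\<Sum>t\<in>K. upper_triangle_sum {i\<in>S. f i = t} a b) \<le> upper_triangle_sum S a b"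
proof -
  let ?row = "\<lambda>i. \<Sum>j\<in>S. if i \<le> j then a i * b j else 0"
  have "(\<Sum>t\<in>K. upper_triangle_sum {i\<in>S. f i = t} a b) \<le> (\<Sum>t\<in>K. \<Sum>i\<in>{i\<in>S. f i = t}. ?row i)"
    unfolding upper_triangle_sum_def using assms by (intro sum_mono sum_mono2) auto
  also have "\<dots> = upper_triangle_sum S a b"
    unfolding upper_triangle_sum_def using sum.group[OF assms(1-3), of ?row]
    by (simp add: conj_commute)
  finally show ?thesis .
qed

lemma square_sum_le_card_times_sum_fibres:
  fixes x :: "'i \<Rightarrow> real"
  assumes "finite S" "finite K" "f ` S \<subseteq> K"
  shows "(\<Sum>i\<in>S. x i)\<^sup>2 \<le> card K * (\<Sum>t\<in>K. (\<Sum>i\<in>{i\<in>S. f i = t}. x i)\<^sup>2)"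
proof -
  have "(\<Sum>i\<in>S. x i) = (\<Sum>t\<in>K. \<Sum>i\<in>{i\<in>S. f i = t}. x i)"
    using sum.group[OF assms, of x] by (simp add: conj_commute)
  then show ?thesis
    using sum_squared_le_sum_of_squares[of "\<lambda>t. \<Sum>i\<in>{i\<in>S. f i = t}. x i" K]
    by (simp add: mult.commute)
qed

lemma NN_eq_upper_triangle_sum:
  "real (NN k a b) = upper_triangle_sum {1..k} (\<lambda>i. real (a i)) (\<lambda>i. real (b i))"
proof -
  have row: "(\<Sum>i\<in>{1..j}. real (a i * b j))
      = (\<Sum>i\<in>{1..k}. if i \<le> j then real (a i) * real (b j) else 0)" if "j \<in> {1..k}" for j
  proof -
    have "{i \<in> {1..k}. i \<le> j} = {1..j}" using that by auto
    then show ?thesis by (simp add: sum.inter_filter[symmetric])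
  qed
  have "real (NN k a b) = (\<Sum>j\<in>{1..k}. \<Sum>i\<in>{1..j}. real (a i * b j))"
    unfolding NN_def by simp
  also have "\<dots> = (\<Sum>j\<in>{1..k}. \<Sum>i\<in>{1..k}. if i \<le> j then real (a i) * real (b j) else 0)"
    using row by (rule sum.cong[OF refl])
  also have "\<dots> = upper_triangle_sum {1..k} (\<lambda>i. real (a i)) (\<lambda>i. real (b i))"
    unfolding upper_triangle_sum_def by (rule sum.swap)
  finally show ?thesis .
qed

lemma floor_log_Suc_le_ln:
  assumes "T \<ge> 3"
  shows "real (Suc (floor_log T)) \<le> 8 * ln (real T)"
proof -
  have "1 \<le> ln (real T)"
    using exp_le assms by (subst ln_ge_iff) auto
  have "2 ^ floor_log T \<le> T"
    using assms by (intro floor_log_exp2_le) auto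
  then have "(2::real) ^ floor_log T \<le> real T"
    by (metis of_nat_le_iff of_nat_numeral of_nat_power)
  then have "ln ((2::real) ^ floor_log T) \<le> ln (real T)"
    using assms by simp
  then have "real (floor_log T) * ln 2 \<le> ln (real T)"
    by (simp add: ln_realpow)
  with ln2_ge_two_thirds have "real (floor_log T) * (2/3) \<le> ln (real T)"
    by (meson mult_left_mono of_nat_0_le_iff order_trans)
  with \<open>1 \<le> ln (real T)\<close> show ?thesis by simp
qed

lemma floor_log_eq_imp_le_double:
  assumes "floor_log m = floor_log n" "n > 0"
  shows "m \<le> 2 * n"
proof -
  have "2 ^ floor_log n \<le> n"
    using assms(2) by (rule floor_log_exp2_le)
  moreover have "m < 2 * 2 ^ floor_log m"
    by (rule floor_log_exp2_gt)
  ultimately show ?thesis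
    using assms(1) by simp
qed

lemma Delta_le_sqrt:
  assumes "admissible k T a b"
  shows "real (Delta k a b) \<le> sqrt (32 * real (NN k a b) * real T * ln (real T))"
proof -
  let ?I = "{1..k}" and ?a = "\<lambda>i. real (a i)" and ?b = "\<lambda>i. real (b i)"
  define cls where "cls i = floor_log (a i)" for i
  define K where "K = {..floor_log T}"
  define C where "C t = {i \<in> ?I. cls i = t}" for t
  have T3: "T \<ge> 3" and pos: "\<And>i. i \<in> ?I \<Longrightarrow> a i > 0 \<and> b i > 0 \<and> a i * b i \<le> T"
    using assms unfolding admissible_def by auto
  have "a i \<le> T" if "i \<in> ?I" for i
  proof -
    have "a i * 1 \<le> a i * b i"
      using pos[OF that] by (intro mult_le_mono2) auto
    then show ?thesis
      using pos[OF that] by linarith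
  qed
  then have cls_K: "cls ` ?I \<subseteq> K"
    unfolding cls_def K_def by (auto intro: floor_log_le_iff)
  have class_bound: "(\<Sum>i\<in>C t. ?a i * ?b i)\<^sup>2 \<le> 4 * real T * upper_triangle_sum (C t) ?a ?b" for t
  proof (rule square_sum_le_upper_triangle_sum)
    show "?a i * ?b i \<le> real T" if "i \<in> C t" for i
      using pos that unfolding C_def by (auto simp flip: of_nat_mult)
    show "?a j \<le> 2 * ?a i" if "i \<in> C t" "j \<in> C t" for i j
      using that pos floor_log_eq_imp_le_double[of "a j" "a i"] unfolding C_def cls_def by force
  qed (auto simp: C_def)
  have "(real (Delta k a b))\<^sup>2 \<le> card K * (\<Sum>t\<in>K. (\<Sum>i\<in>C t. ?a i * ?b i)\<^sup>2)"
    unfolding Delta_def C_def K_def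
    using square_sum_le_card_times_sum_fibres[OF _ _ cls_K[unfolded K_def]] by simp
  also have "\<dots> \<le> card K * (\<Sum>t\<in>K. 4 * real T * upper_triangle_sum (C t) ?a ?b)"
    using class_bound by (intro mult_left_mono sum_mono) auto
  also have "\<dots> = 4 * real T * card K * (\<Sum>t\<in>K. upper_triangle_sum (C t) ?a ?b)"
    by (simp add: sum_distrib_left mult_ac)
  also have "\<dots> \<le> 4 * real T * card K * real (NN k a b)"
    unfolding NN_eq_upper_triangle_sum C_def
    using sum_upper_triangle_sum_fibres_le[OF _ _ cls_K] by (intro mult_left_mono) (auto simp: K_def)
  also have "\<dots> \<le> 4 * real T * (8 * ln (real T)) * real (NN k a b)"
    using floor_log_Suc_le_ln[OF T3] by (intro mult_right_mono mult_left_mono) (auto simp: K_def)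
  finally have "(real (Delta k a b))\<^sup>2 \<le> 32 * real (NN k a b) * real T * ln (real T)"
    by (simp add: algebra_simps)
  then show ?thesis
    by (intro real_le_rsqrt)
qed

lemma sum_powers_of_two_lt: "(\<Sum>i=1..j. (2::nat) ^ (i - 1)) < 2 ^ j"
  by (induction j) simp_all

lemma Delta_staircase: "Delta (Suc m) (\<lambda>i. 2 ^ (i - 1)) (\<lambda>i. 2 ^ (Suc m - i)) = Suc m * 2 ^ m"
proof -
  have "(2::nat) ^ (i - 1) * 2 ^ (Suc m - i) = 2 ^ m" if "i \<in> {1..Suc m}" for i
    using that by (simp flip: power_add)
  then show ?thesis
    unfolding Delta_def by simp
qed

lemma NN_staircase: "NN k (\<lambda>i. 2 ^ (i - 1)) (\<lambda>i. 2 ^ (k - i)) \<le> k * 2 ^ k"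
proof -
  have "(\<Sum>i=1..j. (2::nat) ^ (i - 1) * 2 ^ (k - j)) \<le> 2 ^ k" if "j \<in> {1..k}" for j
  proof -
    have "(\<Sum>i=1..j. (2::nat) ^ (i - 1) * 2 ^ (k - j)) = (\<Sum>i=1..j. 2 ^ (i - 1)) * 2 ^ (k - j)"
      by (simp add: sum_distrib_right)
    also have "\<dots> \<le> 2 ^ j * 2 ^ (k - j)"
      using sum_powers_of_two_lt[of j] by (intro mult_right_mono) auto
    also have "\<dots> = 2 ^ k"
      using that by (simp flip: power_add)
    finally show ?thesis .
  qed
  then have "NN k (\<lambda>i. 2 ^ (i - 1)) (\<lambda>i. 2 ^ (k - i)) \<le> (\<Sum>j=1..k. (2::nat) ^ k)"
    unfolding NN_def by (intro sum_mono) auto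
  then show ?thesis by simp
qed

lemma Delta_ge_half_sqrt_staircase:
  assumes "T \<ge> 3"
  shows "\<exists>k a b. admissible k T a b \<and>
           real (Delta k a b) \<ge> 1/2 * sqrt (real (NN k a b) * real T * ln (real T))"
proof -
  define m where "m = floor_log T"
  define k where "k = Suc m"
  define a :: "nat \<Rightarrow> nat" where "a i = 2 ^ (i - 1)" for i
  define b :: "nat \<Rightarrow> nat" where "b i = 2 ^ (k - i)" for i
  have "2 ^ m \<le> T"
    unfolding m_def using assms by (intro floor_log_exp2_le) auto
  have "T < 2 ^ k"
    unfolding m_def k_def using floor_log_exp2_gt by simp
  have "floor_log 2 \<le> m"
    unfolding m_def using assms by (intro floor_log_le_iff) auto
  then have "m \<ge> 1"
    by (simp add: floor_log_rec)
  have "a i * b i = 2 ^ m" if "i \<in> {1..k}" for i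
    using that unfolding a_def b_def k_def by (simp flip: power_add)
  with \<open>2 ^ m \<le> T\<close> \<open>m \<ge> 1\<close> assms have adm: "admissible k T a b"
    unfolding admissible_def by (auto simp: k_def a_def b_def)
  have Delta: "real (Delta k a b) = real k * 2 ^ m"
    unfolding k_def a_def b_def Delta_staircase by (simp add: algebra_simps)
  have "real (NN k a b) \<le> real (k * 2 ^ k)"
    using NN_staircase[of k] unfolding a_def b_def by (simp only: of_nat_le_iff)
  then have NN: "real (NN k a b) \<le> 2 * real k * 2 ^ m"
    unfolding k_def by (simp add: algebra_simps)
  have "real T < real (2 ^ k)"
    using \<open>T < 2 ^ k\<close> by (simp only: of_nat_less_iff)
  then have T: "real T < 2 ^ k" and "real T \<le> 2 * 2 ^ m"
    unfolding k_def by simp_all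
  have "ln (real T) < ln ((2::real) ^ k)"
    using T assms by simp
  also have "\<dots> = real k * ln 2"
    by (simp add: ln_realpow)
  also have "\<dots> \<le> real k"
    using ln_2_less_1 by (simp add: mult_left_le)
  finally have lnT: "ln (real T) \<le> real k" by simp
  have "real (NN k a b) * real T * ln (real T) \<le> (2 * real k * 2 ^ m) * (2 * 2 ^ m) * real k"
    using NN \<open>real T \<le> 2 * 2 ^ m\<close> lnT assms by (intro mult_mono) auto
  also have "\<dots> = (2 * (real k * 2 ^ m))\<^sup>2"
    by (simp add: power2_eq_square algebra_simps)
  finally have "sqrt (real (NN k a b) * real T * ln (real T)) \<le> 2 * real (Delta k a b)"
    unfolding Delta by (simp add: real_le_lsqrt)
  then have "1/2 * sqrt (real (NN k a b) * real T * ln (real T)) \<le> real (Delta k a b)"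
    by simp
  with adm show ?thesis by blast
qed

theorem lemma3:
  shows "(\<forall>k T a b. admissible k T a b \<longrightarrow>
            real (Delta k a b) \<le> sqrt (32 * real (NN k a b) * real T * ln (real T)))
       \<and> (\<exists>c::real. c > 0 \<and> (\<forall>T::nat. T \<ge> 3 \<longrightarrow>
            (\<exists>k a b. admissible k T a b \<and>
               real (Delta k a b) \<ge> c * sqrt (real (NN k a b) * real T * ln (real T)))))"
proof
  show "\<forall>k T a b. admissible k T a b \<longrightarrow>
          real (Delta k a b) \<le> sqrt (32 * real (NN k a b) * real T * ln (real T))"
    using Delta_le_sqrt by blast
  show "\<exists>c::real. c > 0 \<and> (\<forall>T::nat. T \<ge> 3 \<longrightarrow>
          (\<exists>k a b. admissible k T a b \<and>
             real (Delta k a b) \<ge> c * sqrt (real (NN k a b) * real T * ln (real T))))"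
    using Delta_ge_half_sqrt_staircase by (intro exI[of _ "1/2"]) auto
qed

end
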